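(* Let $V$ be a nonempty set and $T:V\to V$. Then $T$ has a Drazin inverse if and only if there exists an integer $k\ge0$ such that $S:=T|_{T^k(V)}:T^k(V)\to T^k(V)$ is a bijection. If this holds, the Drazin inverse of $T$ is $S^{-(k+1)}\circ T^k$.
   Context: $T^0$ is the identity and $T^i=T\circ T^{i-1}$. A Drazin inverse of $T:V\to V$ is a map $G:V\to V$ such that, for some integer $k\ge1$, $T^k\circ G\circ T=T^k$, and also $G\circ T\circ G=G$ and $T\circ G=G\circ T$. (It is unique when it exists.) *)

theory Defs
  imports Main
begin

text \<open>Drazin inverse of a self-map T of a set V (V is the type 'a; types are nonempty).\<close>
definition drazin_inverse :: "('a \<Rightarrow> 'a) \<Rightarrow> ('a \<Rightarrow> 'a) \<Rightarrow> bool" where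
  "drazin_inverse T G \<longleftrightarrow>
     (\<exists>k::nat. k \<ge> 1 \<and> (T ^^ k) \<circ> G \<circ> T = T ^^ k) \<and> G \<circ> T \<circ> G = G \<and> T \<circ> G = G \<circ> T"

text \<open>Inverse of S = T restricted to T^k(V), as a map on T^k(V) (extended arbitrarily outside).\<close>
definition restr_inv :: "('a \<Rightarrow> 'a) \<Rightarrow> nat \<Rightarrow> 'a \<Rightarrow> 'a" where
  "restr_inv T k = inv_into (range (T ^^ k)) T"

end

theory Submission
  imports Defs
begin

text \<open>A Drazin inverse G commutes with T, satisfies G = T G G (so G maps into every T^n(V))
  and T^(n+1) G = T^n for all large n. The last identity makes G a left inverse of T on
  T^n(V) and shows T(T^n(V)) = T^n(V), so T is bijective there. Conversely, if T is bijective
  on R = T^k(V) with inverse S, then S^(k+1) T^k agrees with S on R and maps into R, which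
  yields the Drazin identities. For uniqueness, any Drazin inverse G maps into R and
  satisfies T^(k+1) G = T^k by injectivity of T on R; applying S^(k+1) recovers
  G = S^(k+1) T^k.\<close>

lemma funpow_commute_apply:
  assumes "\<And>x. f (g x) = g (f x)"
  shows "(f ^^ n) (g x) = g ((f ^^ n) x)"
  by (induction n) (simp_all add: assms)

lemma drazin_inverseD:
  assumes "drazin_inverse T G"
  obtains m where "\<And>n x. m \<le> n \<Longrightarrow> (T ^^ Suc n) (G x) = (T ^^ n) x"
    and "\<And>x. G (T (G x)) = G x" and "\<And>x. T (G x) = G (T x)"
proof -
  from assms obtain m where
    "(T ^^ m) \<circ> G \<circ> T = T ^^ m" "G \<circ> T \<circ> G = G" "T \<circ> G = G \<circ> T"
    unfolding drazin_inverse_def by blast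
  then have index: "\<And>x. (T ^^ m) (G (T x)) = (T ^^ m) x"
    and idem: "\<And>x. G (T (G x)) = G x" and comm: "\<And>x. T (G x) = G (T x)"
    by (simp_all only: fun_eq_iff comp_apply)
  have "(T ^^ Suc n) (G x) = (T ^^ n) x" if "m \<le> n" for n x
  proof -
    define d where "d = n - m"
    have n: "n = d + m" using \<open>m \<le> n\<close> by (simp add: d_def)
    have "(T ^^ Suc n) (G x) = (T ^^ d) ((T ^^ m) (T (G x)))"
      by (simp only: n funpow_Suc_right funpow_add comp_apply)
    also have "\<dots> = (T ^^ n) x" by (simp only: comm index n funpow_add comp_apply)
    finally show ?thesis .
  qed
  then show thesis using idem comm by (rule that)
qed

lemma drazin_inverse_in_range_funpow:
  assumes "drazin_inverse T G"
  shows "G x \<in> range (T ^^ n)"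
proof -
  obtain idem: "\<And>x. G (T (G x)) = G x" and comm: "\<And>x. T (G x) = G (T x)"
    using drazin_inverseD[OF assms] by metis
  show ?thesis
  proof (induction n arbitrary: x)
    case (Suc n)
    obtain y where "G (G x) = (T ^^ n) y" using Suc.IH by blast
    moreover have "G x = T (G (G x))" by (metis comm idem)
    ultimately have "G x = (T ^^ Suc n) y" by simp
    then show ?case by blast
  qed simp
qed

lemma drazin_inverse_imp_bij_betw_range:
  assumes "drazin_inverse T G"
  shows "\<exists>k. bij_betw T (range (T ^^ k)) (range (T ^^ k))"
proof -
  obtain m where shift: "\<And>n x. m \<le> n \<Longrightarrow> (T ^^ Suc n) (G x) = (T ^^ n) x"
    and comm: "\<And>x. T (G x) = G (T x)"
    using drazin_inverseD[OF assms] by metis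
  have left_inverse: "G (T ((T ^^ m) x)) = (T ^^ m) x" for x
  proof -
    have "G (T ((T ^^ m) x)) = (T ^^ Suc m) (G x)"
      using funpow_commute_apply[of T G "Suc m" x, OF comm] by simp
    also have "\<dots> = (T ^^ m) x" by (rule shift) simp
    finally show ?thesis .
  qed
  have "inj_on T (range (T ^^ m))"
    by (rule inj_on_inverseI[where g = G]) (auto simp: left_inverse)
  moreover have "T ` range (T ^^ m) = range (T ^^ m)"
  proof
    show "T ` range (T ^^ m) \<subseteq> range (T ^^ m)"
    proof clarify
      fix x
      have "T ((T ^^ m) x) = (T ^^ m) (T x)" by (rule funpow_swap1)
      then show "T ((T ^^ m) x) \<in> range (T ^^ m)" by (simp only: rangeI)
    qed
    show "range (T ^^ m) \<subseteq> T ` range (T ^^ m)"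
    proof clarify
      fix x
      have "(T ^^ m) x = T ((T ^^ m) (G x))" using shift[of m x] by simp
      then show "(T ^^ m) x \<in> T ` range (T ^^ m)" by blast
    qed
  qed
  ultimately show ?thesis unfolding bij_betw_def by blast
qed

lemma funpow_funpow_inv_into:
  assumes "bij_betw f A A" and "y \<in> A"
  shows "(f ^^ n) ((inv_into A f ^^ n) y) = y"
  using \<open>y \<in> A\<close>
proof (induction n arbitrary: y)
  case (Suc n)
  have "inv_into A f y \<in> A" "f (inv_into A f y) = y"
    using Suc.prems assms(1) by (auto simp: bij_betw_def inv_into_into f_inv_into_f)
  with Suc.IH show ?case
    by (simp only: funpow.simps(2)[where f = f] funpow_Suc_right[where f = "inv_into A f"] comp_apply)
qed simp

lemma funpow_inv_into_funpow:
  assumes "bij_betw f A A" and "x \<in> A"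
  shows "(inv_into A f ^^ n) ((f ^^ n) x) = x"
  using \<open>x \<in> A\<close>
proof (induction n arbitrary: x)
  case (Suc n)
  have "f x \<in> A" "inv_into A f (f x) = x"
    using Suc.prems assms(1) by (auto simp: bij_betw_def inv_into_f_f)
  with Suc.IH show ?case
    by (simp only: funpow.simps(2)[where f = "inv_into A f"] funpow_Suc_right[where f = f] comp_apply)
qed simp

context
  fixes T :: "'a \<Rightarrow> 'a" and k :: nat
  assumes bij: "bij_betw T (range (T ^^ k)) (range (T ^^ k))"
begin

lemma drazin_formula_on_range:
  "y \<in> range (T ^^ k) \<Longrightarrow> (restr_inv T k ^^ (k + 1)) ((T ^^ k) y) = restr_inv T k y"
  using funpow_inv_into_funpow[OF bij, of y k] by (simp add: restr_inv_def)

lemma drazin_formula_apply: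
  "(restr_inv T k ^^ (k + 1)) ((T ^^ k) (T x)) = (restr_inv T k ^^ k) ((T ^^ k) x)"
proof -
  have "(T ^^ k) x \<in> range (T ^^ k)" by simp
  then have "restr_inv T k (T ((T ^^ k) x)) = (T ^^ k) x"
    unfolding restr_inv_def by (rule inv_into_f_f[OF bij_betw_imp_inj_on[OF bij]])
  then show ?thesis by (simp only: Suc_eq_plus1[symmetric] funpow_Suc_right comp_apply funpow_swap1)
qed

lemma drazin_inverse_drazin_formula: "drazin_inverse T ((restr_inv T k ^^ (k + 1)) \<circ> (T ^^ k))"
proof -
  define S where "S = restr_inv T k"
  define G where "G = (S ^^ (k + 1)) \<circ> (T ^^ k)"
  have S_bij: "bij_betw S (range (T ^^ k)) (range (T ^^ k))"
    unfolding S_def restr_inv_def by (rule bij_betw_inv_into[OF bij])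
  have G_in_range: "G x \<in> range (T ^^ k)" for x
    unfolding G_def comp_def by (rule bij_betw_apply[OF bij_betw_funpow[OF S_bij]]) simp
  have GT: "G (T x) = (S ^^ k) ((T ^^ k) x)" for x
    unfolding G_def S_def comp_def by (rule drazin_formula_apply)
  have comm: "T (G x) = G (T x)" for x
  proof -
    have "(S ^^ k) ((T ^^ k) x) \<in> range (T ^^ k)"
      by (rule bij_betw_apply[OF bij_betw_funpow[OF S_bij]]) simp
    then have "T (S ((S ^^ k) ((T ^^ k) x))) = (S ^^ k) ((T ^^ k) x)"
      unfolding S_def restr_inv_def by (simp add: f_inv_into_f bij_betw_imp_surj_on[OF bij])
    then show ?thesis unfolding GT by (simp add: G_def)
  qed
  have idem: "G (T (G x)) = G x" for x
  proof -
    have "T (G x) \<in> range (T ^^ k)" using bij_betw_apply[OF bij G_in_range] .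
    then have "G (T (G x)) = S (T (G x))"
      unfolding G_def S_def comp_apply by (rule drazin_formula_on_range)
    also have "\<dots> = G x"
      unfolding S_def restr_inv_def by (rule inv_into_f_f[OF bij_betw_imp_inj_on[OF bij] G_in_range])
    finally show ?thesis .
  qed
  have index: "(T ^^ (k + 1)) (G (T x)) = (T ^^ (k + 1)) x" for x
    using funpow_funpow_inv_into[OF bij, of "(T ^^ k) x" k]
    by (simp add: GT S_def restr_inv_def)
  have "(T ^^ (k + 1)) \<circ> G \<circ> T = T ^^ (k + 1)" by (rule ext) (simp only: comp_apply index)
  moreover have "G \<circ> T \<circ> G = G" by (rule ext) (simp only: comp_apply idem)
  moreover have "T \<circ> G = G \<circ> T" by (rule ext) (simp only: comp_apply comm)
  ultimately show ?thesis
    unfolding drazin_inverse_def G_def S_def by (blast intro: le_add2)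
qed

lemma drazin_inverse_eq_drazin_formula:
  assumes "drazin_inverse T G"
  shows "G = (restr_inv T k ^^ (k + 1)) \<circ> (T ^^ k)"
proof
  fix x
  obtain m where shift: "\<And>n x. m \<le> n \<Longrightarrow> (T ^^ Suc n) (G x) = (T ^^ n) x"
    using drazin_inverseD[OF assms] by metis
  have G_in_range: "G x \<in> range (T ^^ k)" by (rule drazin_inverse_in_range_funpow[OF assms])
  have "inj_on (T ^^ m) (range (T ^^ k))"
    using bij_betw_funpow[OF bij] by (simp add: bij_betw_def)
  moreover have "(T ^^ m) ((T ^^ (k + 1)) (G x)) = (T ^^ m) ((T ^^ k) x)"
    using shift[of "m + k" x] by (simp add: funpow_add funpow_swap1[symmetric])
  moreover have "(T ^^ (k + 1)) (G x) \<in> range (T ^^ k)"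
    using bij_betw_apply[OF bij_betw_funpow[OF bij] G_in_range] .
  ultimately have "(T ^^ (k + 1)) (G x) = (T ^^ k) x" by (rule inj_onD) simp
  with funpow_inv_into_funpow[OF bij G_in_range, of "k + 1"]
  show "G x = ((restr_inv T k ^^ (k + 1)) \<circ> (T ^^ k)) x"
    by (simp only: restr_inv_def comp_apply)
qed

end

theorem mainTheorem19:
  fixes T :: "'a \<Rightarrow> 'a"
  shows "((\<exists>G. drazin_inverse T G) \<longleftrightarrow>
           (\<exists>k::nat. bij_betw T (range (T ^^ k)) (range (T ^^ k))))
       \<and> (\<forall>k::nat. bij_betw T (range (T ^^ k)) (range (T ^^ k)) \<longrightarrow>
             drazin_inverse T ((restr_inv T k ^^ (k + 1)) \<circ> (T ^^ k))
           \<and> (\<forall>G. drazin_inverse T G \<longrightarrow> G = (restr_inv T k ^^ (k + 1)) \<circ> (T ^^ k)))"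
  using drazin_inverse_imp_bij_betw_range drazin_inverse_drazin_formula
    drazin_inverse_eq_drazin_formula by blast

end
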